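(* Let $l\ge2$ be an integer and $r_1,\dots,r_{2l}\ge0$. Then $$(r_1+r_2)\Big(\prod_{j=2}^{l-1}(r_j+r_{j+1})\Big)(r_l+r_{l+1})\cdot(r_1+r_{l+2})\Big(\prod_{j=l+2}^{2l-1}(r_j+r_{j+1})\Big)(r_{2l}+r_{l+1})\ \ge\ \Big(\max_{1\le i\le 2l}r_i\Big)^2\Big(\prod_{j=1}^{2l}r_j\Big)'',$$ where $\big(\prod_{j=1}^{2l}r_j\big)''$ denotes the product of the $r_j$ with one maximal and one minimal factor removed; i.e. if $r_{i_1}\ge r_{i_2}\ge\dots\ge r_{i_{2l}}$ is a non-increasing rearrangement, the right-hand side is $r_{i_1}^2\prod_{j=2}^{2l-1}r_{i_j}$.
   Context: Empty products equal $1$. *)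

theory Defs
  imports "HOL-Analysis.Analysis"
begin

end

theory Submission
  imports Defs
begin

text \<open>
  The left-hand side is the product of \<open>r\<^sub>u + r\<^sub>v\<close> over the edges \<open>uv\<close> of the \<open>2l\<close>-cycle
  \<open>1, 2, \<dots>, l + 1, 2l, 2l - 1, \<dots>, l + 2\<close>. Choose one endpoint of every edge: walking along
  the cycle from the maximal vertex to the minimal one, take the starting point of each edge
  on this arc and the end point of every other edge. Then the maximal vertex is chosen twice,
  the minimal one never and every other vertex exactly once, so dropping the other
  (nonnegative) summands bounds the product from below by the right-hand side.
\<close>

lemma bij_betw_Suc_mod: "bij_betw (\<lambda>k. Suc k mod n) {..<n} {..<n}"
proof -
  have "inj_on (\<lambda>k. Suc k mod n) {..<n}"
    by (auto simp: inj_on_def mod_Suc split: if_splits)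
  moreover have "(\<lambda>k. Suc k mod n) ` {..<n} \<subseteq> {..<n}"
    by auto
  ultimately show ?thesis
    by (simp add: bij_betw_def endo_inj_surj)
qed

text \<open>Keep the summand \<open>g k\<close> of factor \<open>k\<close> for \<open>k \<in> L\<close> and \<open>g (s k)\<close> otherwise: then
  \<open>a\<close> is counted twice and \<open>b\<close> never.\<close>

lemma prod_cycle_ge_arc:
  fixes g :: "nat \<Rightarrow> 'a::linordered_semidom" and n :: nat
  defines "s \<equiv> \<lambda>k. Suc k mod n"
  assumes nonneg: "\<And>k. k < n \<Longrightarrow> 0 \<le> g k"
    and L: "L \<subseteq> {..<n}" "L - s ` L = {a}" "s ` L - L = {b}"
  shows "g a * (\<Prod>k\<in>{..<n} - {b}. g k) \<le> (\<Prod>k<n. g k + g (s k))"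
proof -
  have bij: "bij_betw s {..<n} {..<n}"
    unfolding s_def by (rule bij_betw_Suc_mod)
  then have s_compl: "s ` ({..<n} - L) = {..<n} - s ` L"
    using inj_on_image_set_diff[of s "{..<n}" "{..<n}" L] L(1) by (simp add: bij_betw_def)
  have "(\<Prod>k<n. if k \<in> L then g k else g (s k)) \<le> (\<Prod>k<n. g k + g (s k))"
    using bij nonneg by (intro prod_mono) (auto simp: bij_betw_def)
  moreover have "(\<Prod>k<n. if k \<in> L then g k else g (s k))
      = (\<Prod>k\<in>L. g k) * (\<Prod>k\<in>{..<n} - s ` L. g k)"
  proof -
    have "(\<Prod>k\<in>{..<n} - L. g (s k)) = (\<Prod>k\<in>{..<n} - s ` L. g k)"
      using prod.reindex[of s "{..<n} - L" g] bij s_compl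
      by (simp add: bij_betw_def inj_on_diff)
    then show ?thesis
      using L(1) by (simp add: prod.If_cases Int_absorb1 Diff_eq)
  qed
  moreover have "(\<Prod>k\<in>L. g k) * (\<Prod>k\<in>{..<n} - s ` L. g k) = g a * (\<Prod>k\<in>{..<n} - {b}. g k)"
  proof -
    have "L \<union> ({..<n} - s ` L) = {..<n} - {b}" "L \<inter> ({..<n} - s ` L) = {a}"
      using L by auto
    then show ?thesis
      using prod.union_inter[of L "{..<n} - s ` L" g] finite_subset[OF L(1)]
      by (simp add: mult.commute)
  qed
  ultimately show ?thesis by simp
qed

lemma cycle_arc_exists:
  assumes "a < n" "b < n" "a \<noteq> b"
  obtains L where "L \<subseteq> {..<n}"
    "L - (\<lambda>k. Suc k mod n) ` L = {a}" "(\<lambda>k. Suc k mod n) ` L - L = {b}"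
proof -
  define s where "s = (\<lambda>k. Suc k mod n)"
  have s_interval: "s ` {c..<d} = {Suc c..<Suc d}" if "d < n" for c d
    using that by (auto simp: s_def image_iff)
  have "\<exists>L \<subseteq> {..<n}. L - s ` L = {a} \<and> s ` L - L = {b}"
  proof (cases "a < b")
    case True
    then show ?thesis
      using s_interval[of b a] assms by (intro exI[of _ "{a..<b}"]) auto
  next
    case False
    have "bij_betw s {..<n} {..<n}"
      unfolding s_def by (rule bij_betw_Suc_mod)
    then have "s ` ({..<n} - {b..<a}) = {..<n} - s ` {b..<a}"
      using inj_on_image_set_diff[of s "{..<n}" "{..<n}" "{b..<a}"] assms(1)
      by (simp add: bij_betw_def subset_eq)
    then show ?thesis
      using s_interval[of a b] False assms by (intro exI[of _ "{..<n} - {b..<a}"]) auto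
  qed
  then show ?thesis
    using that unfolding s_def by blast
qed

lemma prod_cycle_ge:
  fixes g :: "nat \<Rightarrow> 'a::linordered_semidom"
  assumes "\<And>k. k < n \<Longrightarrow> 0 \<le> g k" "a < n" "b < n" "a \<noteq> b"
  shows "g a ^ 2 * (\<Prod>k\<in>{..<n} - {a, b}. g k) \<le> (\<Prod>k<n. g k + g (Suc k mod n))"
proof -
  obtain L where L: "L \<subseteq> {..<n}"
    "L - (\<lambda>k. Suc k mod n) ` L = {a}" "(\<lambda>k. Suc k mod n) ` L - L = {b}"
    using assms(2-4) by (rule cycle_arc_exists)
  have "g a * (\<Prod>k\<in>{..<n} - {b}. g k) \<le> (\<Prod>k<n. g k + g (Suc k mod n))"
    by (rule prod_cycle_ge_arc[OF assms(1) L])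
  moreover have "(\<Prod>k\<in>{..<n} - {b}. g k) = g a * (\<Prod>k\<in>{..<n} - {b} - {a}. g k)"
    using assms by (intro prod.remove) auto
  moreover have "{..<n} - {b} - {a} = {..<n} - {a, b}"
    by auto
  ultimately show ?thesis
    by (simp add: power2_eq_square mult.assoc)
qed

lemma prod_cycle_bij_ge:
  fixes r :: "'v \<Rightarrow> 'a::linordered_semidom" and \<sigma> :: "nat \<Rightarrow> 'v"
  assumes \<sigma>: "bij_betw \<sigma> {..<n} V"
    and nonneg: "\<And>v. v \<in> V \<Longrightarrow> 0 \<le> r v"
    and uw: "u \<in> V" "w \<in> V" "u \<noteq> w"
  shows "r u ^ 2 * (\<Prod>v\<in>V - {u, w}. r v) \<le> (\<Prod>k<n. r (\<sigma> k) + r (\<sigma> (Suc k mod n)))"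
proof -
  have inj: "inj_on \<sigma> {..<n}" and img: "\<sigma> ` {..<n} = V"
    using \<sigma> by (simp_all add: bij_betw_def)
  obtain a b where ab: "a < n" "b < n" "u = \<sigma> a" "w = \<sigma> b"
    using uw(1,2) img by blast
  have "\<sigma> ` ({..<n} - {a, b}) = V - {u, w}"
    using inj_on_image_set_diff[OF inj, of "{..<n}" "{a, b}"] img ab by simp
  then have "(\<Prod>v\<in>V - {u, w}. r v) = (\<Prod>k\<in>{..<n} - {a, b}. r (\<sigma> k))"
    using prod.reindex[of \<sigma> "{..<n} - {a, b}" r] inj by (simp add: inj_on_diff)
  moreover have "\<And>k. k < n \<Longrightarrow> 0 \<le> r (\<sigma> k)" "a \<noteq> b"
    using nonneg img uw(3) ab by auto
  ultimately show ?thesis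
    using prod_cycle_ge[of n "\<lambda>k. r (\<sigma> k)" a b] ab by simp
qed

text \<open>\<open>cycle_vertex l k\<close> is the \<open>k\<close>-th vertex, counted from \<open>0\<close>, of the cycle
  \<open>1, 2, \<dots>, l + 1, 2l, 2l - 1, \<dots>, l + 2\<close> formed by the factors of the left-hand side.\<close>

definition cycle_vertex :: "nat \<Rightarrow> nat \<Rightarrow> nat" where
  "cycle_vertex l k = (if k \<le> l then Suc k else 3 * l + 1 - k)"

lemma bij_betw_cycle_vertex: "bij_betw (cycle_vertex l) {..<2 * l} {1..2 * l}"
  by (rule bij_betw_byWitness[where f' = "\<lambda>j. if j \<le> l + 1 then j - 1 else 3 * l + 1 - j"])
    (auto simp: cycle_vertex_def)

lemma prod_cycle_vertex:
  fixes r :: "nat \<Rightarrow> real"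
  assumes l: "l \<ge> 2"
  shows "(\<Prod>k<2*l. r (cycle_vertex l k) + r (cycle_vertex l (Suc k mod (2*l))))
    = (r 1 + r 2) * (\<Prod>j\<in>{2..l-1}. r j + r (j+1)) * (r l + r (l+1))
      * (r 1 + r (l+2)) * (\<Prod>j\<in>{l+2..2*l-1}. r j + r (j+1)) * (r (2*l) + r (l+1))"
proof -
  define E where "E k = r (cycle_vertex l k) + r (cycle_vertex l (Suc k mod (2*l)))" for k
  have "(\<Prod>k<2*l. E k) = (\<Prod>k\<in>{..<l} \<union> {l+1..<2*l-1}. E k) * (\<Prod>k\<in>{l, 2*l-1}. E k)"
  proof -
    have "{..<2*l} = ({..<l} \<union> {l+1..<2*l-1}) \<union> {l, 2*l-1}"
      using l by auto
    then show ?thesis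
      using l by (simp only:) (rule prod.union_disjoint, auto)
  qed
  also have "\<dots> = (\<Prod>k<l. E k) * (\<Prod>k\<in>{l+1..<2*l-1}. E k) * E l * E (2*l-1)"
    using l by (subst prod.union_disjoint) (auto simp: mult.assoc)
  also have "(\<Prod>k<l. E k) = (\<Prod>j\<in>{1..l}. r j + r (j+1))"
    using l by (auto simp: prod.atLeast1_atMost_eq E_def cycle_vertex_def intro!: prod.cong)
  also have "\<dots> = (r 1 + r 2) * (\<Prod>j\<in>{2..l-1}. r j + r (j+1)) * (r l + r (l+1))"
  proof -
    have "{1..l} = insert 1 (insert l {2..l-1})"
      using l by auto
    then show ?thesis
      using l by (simp add: ac_simps numeral_2_eq_2)
  qed
  also have "(\<Prod>k\<in>{l+1..<2*l-1}. E k) = (\<Prod>j\<in>{l+2..2*l-1}. r j + r (j+1))"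
    by (rule prod.reindex_bij_witness[where i = "\<lambda>j. 3*l - j" and j = "\<lambda>k. 3*l - k"])
      (auto simp: E_def cycle_vertex_def Suc_diff_le)
  also have "E l = r (2*l) + r (l+1)"
    using l by (simp add: E_def cycle_vertex_def)
  also have "E (2*l-1) = r 1 + r (l+2)"
    using l by (auto simp: E_def cycle_vertex_def)
  finally show ?thesis
    by (simp add: E_def ac_simps)
qed

theorem lemma3p5:
  fixes l :: nat and r :: "nat \<Rightarrow> real" and imax imin :: nat
  assumes "l \<ge> 2"
    and "\<And>i. i \<in> {1..2*l} \<Longrightarrow> r i \<ge> 0"
    and "imax \<in> {1..2*l}" and "imin \<in> {1..2*l}" and "imax \<noteq> imin"
    and "\<And>i. i \<in> {1..2*l} \<Longrightarrow> r i \<le> r imax"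
    and "\<And>i. i \<in> {1..2*l} \<Longrightarrow> r imin \<le> r i"
  shows "(r 1 + r 2) * (\<Prod>j\<in>{2..l-1}. r j + r (j+1)) * (r l + r (l+1))
         * (r 1 + r (l+2)) * (\<Prod>j\<in>{l+2..2*l-1}. r j + r (j+1)) * (r (2*l) + r (l+1))
         \<ge> (Max (r ` {1..2*l}))^2 * (\<Prod>j\<in>{1..2*l} - {imax, imin}. r j)"
proof -
  have "Max (r ` {1..2*l}) = r imax"
    using assms(3,6) by (intro Max_eqI) auto
  moreover have "r imax ^ 2 * (\<Prod>j\<in>{1..2*l} - {imax, imin}. r j)
      \<le> (\<Prod>k<2*l. r (cycle_vertex l k) + r (cycle_vertex l (Suc k mod (2*l))))"
    using bij_betw_cycle_vertex assms(2-5) by (rule prod_cycle_bij_ge)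
  ultimately show ?thesis
    using prod_cycle_vertex[OF assms(1), of r] by simp
qed

end
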